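(* Let $f,g:[0,1]^d\to\mathbb{R}$ have bounded HK$\mathbf{0}$-variation. Then for all $\mathbf{a},\mathbf{b}\in[0,1]^d$ with $\mathbf{a}\le\mathbf{b}$, $$\operatorname{Var}_{HK\mathbf{0}}(f+g;[\mathbf{0},\mathbf{b}])-\operatorname{Var}_{HK\mathbf{0}}(f+g;[\mathbf{0},\mathbf{a}])\le\operatorname{Var}_{HK\mathbf{0}}(f;[\mathbf{0},\mathbf{b}])+\operatorname{Var}_{HK\mathbf{0}}(g;[\mathbf{0},\mathbf{b}])-\operatorname{Var}_{HK\mathbf{0}}(f;[\mathbf{0},\mathbf{a}])-\operatorname{Var}_{HK\mathbf{0}}(g;[\mathbf{0},\mathbf{a}]).$$
   Context: For a box $[\mathbf{c},\mathbf{e}]$, $\Delta(f;[\mathbf{c},\mathbf{e}])$ is the alternating sum $\sum_{j\in\{0,1\}^s}(-1)^{\sum j_i}f$ over its vertices (sign $+$ at $\mathbf{e}$). The Vitali variation of $f$ on a box is the supremum over grid partitions of the box (generated by one-dimensional partitions of each coordinate interval) of $\sum|\Delta(f;A)|$ over cells $A$. For $\mathbf{a}\in[0,1]^d$, $\mathbf{a}\ne\mathbf{0}$, $\operatorname{Var}_{HK\mathbf{0}}(f;[\mathbf{0},\mathbf{a}])$ is the sum over all nonempty $\{i_1<\dots<i_s\}\subseteq\{1,\dots,d\}$ of the $s$-dimensional Vitali variation of $f$ restricted to the face $\{\mathbf{x}\in[\mathbf{0},\mathbf{a}]:x_j=0\text{ for }j\notin\{i_1,\dots,i_s\}\}$ (degenerate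 faces contributing $0$), and $\operatorname{Var}_{HK\mathbf{0}}(f;[\mathbf{0},\mathbf{0}])=0$. $f$ has bounded HK$\mathbf{0}$-variation if $\operatorname{Var}_{HK\mathbf{0}}(f;[0,1]^d)<\infty$. *)

theory Defs
  imports "HOL-Analysis.Analysis" "HOL-Library.Extended_Real"
begin

text \<open>Points of [0,1]^d are vectors of type real^'n (d = CARD('n)).
  A grid partition of the box [0,a] is given by one finite set of division
  points per coordinate, containing the endpoints 0 and a_i.\<close>

definition grid_partitions :: "real^'n \<Rightarrow> ('n \<Rightarrow> real set) set" where
  "grid_partitions a = {P. \<forall>i. finite (P i) \<and> {0, a$i} \<subseteq> P i \<and> P i \<subseteq> {0..a$i}}"

text \<open>Cells of the grid on the face of [0,a] spanned by the coordinates in S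
  (all other coordinates fixed to 0): lower corner c, upper corner e, with
  c_i < e_i consecutive division points for i in S.\<close>

definition face_cells :: "'n::finite set \<Rightarrow> ('n \<Rightarrow> real set) \<Rightarrow> ((real^'n) \<times> (real^'n)) set" where
  "face_cells S P = {ce. (\<forall>i\<in>S. fst ce$i \<in> P i \<and> snd ce$i \<in> P i \<and> fst ce$i < snd ce$i
        \<and> P i \<inter> {fst ce$i<..<snd ce$i} = {})
        \<and> (\<forall>i. i \<notin> S \<longrightarrow> fst ce$i = 0 \<and> snd ce$i = 0)}"

definition box_delta :: "(real^'n \<Rightarrow> real) \<Rightarrow> 'n set \<Rightarrow> real^'n \<Rightarrow> real^'n \<Rightarrow> real" where
  "box_delta f S c e = (\<Sum>J\<in>Pow S. (-1) ^ card (S - J) * f (\<chi> i. if i \<in> J then e$i else c$i))"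

definition vitali_var_face :: "(real^'n \<Rightarrow> real) \<Rightarrow> 'n set \<Rightarrow> real^'n \<Rightarrow> ereal" where
  "vitali_var_face f S a =
     (SUP P\<in>grid_partitions a. ereal (\<Sum>ce\<in>face_cells S P. \<bar>box_delta f S (fst ce) (snd ce)\<bar>))"

definition var_HK0 :: "(real^'n \<Rightarrow> real) \<Rightarrow> real^'n \<Rightarrow> ereal" where
  "var_HK0 f a = (if a = 0 then 0 else (\<Sum>S\<in>{S. S \<noteq> {}}. vitali_var_face f S a))"

definition bounded_HK0 :: "(real^'n \<Rightarrow> real) \<Rightarrow> bool" where
  "bounded_HK0 f \<longleftrightarrow> var_HK0 f (\<chi> i. 1) < \<infinity>"

end

theory Submission
  imports Defs
begin

text \<open>Fix a face S and grid partitions P of [0,b] and Q, Q' of [0,a]. Refining a grid never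
  decreases its Vitali sum, because box_delta is additive when a cell is cut in two. So pass to a
  common refinement R of P, Q, Q' on [0,b] that contains the corner a. Its cells inside [0,a] form
  a grid of [0,a] refining Q and Q', and on each remaining cell
  |\<Delta>(f+g)| \<le> |\<Delta>f| + |\<Delta>g|. This gives
  V(f+g;b) + V(f;a) + V(g;a) \<le> V(f+g;a) + V(f;b) + V(g;b) face by face; bounded variation
  makes all six terms finite, so the inequality can be rearranged.\<close>

lemma ereal_diff_le_of_add_le:
  fixes p q r s u v :: ereal
  assumes "\<bar>p\<bar> \<noteq> \<infinity>" "\<bar>q\<bar> \<noteq> \<infinity>" "\<bar>r\<bar> \<noteq> \<infinity>" "\<bar>s\<bar> \<noteq> \<infinity>" "\<bar>u\<bar> \<noteq> \<infinity>" "\<bar>v\<bar> \<noteq> \<infinity>"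
    and "p + q + r \<le> s + u + v"
  shows "p - s \<le> u + v - q - r"
proof -
  obtain p' q' r' s' u' v' where
    "p = ereal p'" "q = ereal q'" "r = ereal r'" "s = ereal s'" "u = ereal u'" "v = ereal v'"
    using assms(1-6) by (metis ereal_real')
  then show ?thesis using assms(7) by simp
qed

lemma ereal_SUP_add_SUP_le:
  fixes u :: "'a \<Rightarrow> ereal" and v :: "'b \<Rightarrow> ereal"
  assumes "A \<noteq> {}" "B \<noteq> {}" "\<And>x. x \<in> A \<Longrightarrow> 0 \<le> u x" "\<And>y. y \<in> B \<Longrightarrow> 0 \<le> v y"
    and "\<And>x y. x \<in> A \<Longrightarrow> y \<in> B \<Longrightarrow> u x + v y \<le> C"
  shows "(SUP x\<in>A. u x) + (SUP y\<in>B. v y) \<le> C"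
proof -
  have "0 \<le> (SUP y\<in>B. v y)" using assms(2,4) by (meson SUP_upper2 ex_in_conv)
  then have "(SUP x\<in>A. u x) + (SUP y\<in>B. v y) = (SUP x\<in>A. u x + (SUP y\<in>B. v y))"
    using assms(1) by (simp add: SUP_ereal_add_left)
  also have "\<dots> = (SUP x\<in>A. SUP y\<in>B. u x + v y)"
    using assms(2,3) by (intro SUP_cong refl) (simp add: SUP_ereal_add_right)
  also have "\<dots> \<le> C" using assms(5) by (intro SUP_least)
  finally show ?thesis .
qed

definition vec_upd :: "'a^'n \<Rightarrow> 'n \<Rightarrow> 'a \<Rightarrow> 'a^'n" where
  "vec_upd v k t = (\<chi> i. if i = k then t else v$i)"

lemma vec_upd_nth [simp]: "vec_upd v k t $ i = (if i = k then t else v$i)"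
  by (simp add: vec_upd_def)

definition box_vertex :: "'n set \<Rightarrow> 'a^'n \<Rightarrow> 'a^'n \<Rightarrow> 'a^'n" where
  "box_vertex J c e = (\<chi> i. if i \<in> J then e$i else c$i)"

lemma sum_Pow_remove:
  assumes "finite S" "k \<in> S"
  shows "(\<Sum>J\<in>Pow S. F J) = (\<Sum>J\<in>Pow (S - {k}). F (insert k J) + F J)"
proof -
  have S: "S = insert k (S - {k})" using assms by auto
  have inj: "inj_on (insert k) (Pow (S - {k}))" by (auto simp: inj_on_def)
  have "(\<Sum>J\<in>Pow S. F J) = (\<Sum>J\<in>Pow (S - {k}). F J) + (\<Sum>J\<in>insert k ` Pow (S - {k}). F J)"
    by (subst S, subst Pow_insert, rule sum.union_disjoint) (use assms in auto)
  also have "(\<Sum>J\<in>insert k ` Pow (S - {k}). F J) = (\<Sum>J\<in>Pow (S - {k}). F (insert k J))"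
    by (rule sum.reindex[OF inj, unfolded comp_def])
  finally show ?thesis by (simp add: sum.distrib add.commute)
qed

lemma box_delta_eq_sum_differences:
  assumes "k \<in> S"
  shows "box_delta h S c e = (\<Sum>J\<in>Pow (S - {k}). (-1) ^ card (S - {k} - J) *
     (h (box_vertex (insert k J) c e) - h (box_vertex J c e)))"
proof -
  have "box_delta h S c e = (\<Sum>J\<in>Pow S. (-1) ^ card (S - J) * h (box_vertex J c e))"
    by (simp add: box_delta_def box_vertex_def)
  also have "\<dots> = (\<Sum>J\<in>Pow (S - {k}). (-1) ^ card (S - insert k J) * h (box_vertex (insert k J) c e)
      + (-1) ^ card (S - J) * h (box_vertex J c e))"
    by (rule sum_Pow_remove) (use assms in auto)
  also have "\<dots> = (\<Sum>J\<in>Pow (S - {k}). (-1) ^ card (S - {k} - J) *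
     (h (box_vertex (insert k J) c e) - h (box_vertex J c e)))"
  proof (rule sum.cong[OF refl])
    fix J assume J: "J \<in> Pow (S - {k})"
    have "S - insert k J = S - {k} - J" by auto
    moreover have "S - J = insert k (S - {k} - J)" using J assms by auto
    then have "card (S - J) = Suc (card (S - {k} - J))" by simp
    ultimately show "(-1) ^ card (S - insert k J) * h (box_vertex (insert k J) c e)
        + (-1) ^ card (S - J) * h (box_vertex J c e)
      = (-1) ^ card (S - {k} - J) * (h (box_vertex (insert k J) c e) - h (box_vertex J c e))"
      by (simp add: algebra_simps)
  qed
  finally show ?thesis .
qed

lemma box_delta_cut:
  assumes "k \<in> S"
  shows "box_delta h S c e = box_delta h S c (vec_upd e k t) + box_delta h S (vec_upd c k t) e"
proof -
  have "box_vertex (insert k J) c (vec_upd e k t) = box_vertex J (vec_upd c k t) e"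
    "box_vertex J c (vec_upd e k t) = box_vertex J c e"
    "box_vertex (insert k J) (vec_upd c k t) e = box_vertex (insert k J) c e"
    if "J \<in> Pow (S - {k})" for J
    using that by (auto simp: vec_eq_iff box_vertex_def)
  then show ?thesis
    unfolding box_delta_eq_sum_differences[OF assms, of h] sum.distrib[symmetric]
    by (intro sum.cong) (simp_all add: algebra_simps)
qed

lemma box_delta_add:
  "box_delta (\<lambda>x. f x + g x) S c e = box_delta f S c e + box_delta g S c e"
  by (simp add: box_delta_def algebra_simps sum.distrib)

lemma mem_face_cells:
  "(c, e) \<in> face_cells S P \<longleftrightarrow>
     (\<forall>i\<in>S. c$i \<in> P i \<and> e$i \<in> P i \<and> c$i < e$i \<and> P i \<inter> {c$i<..<e$i} = {})
     \<and> (\<forall>i. i \<notin> S \<longrightarrow> c$i = 0 \<and> e$i = 0)"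
  by (simp add: face_cells_def)

lemma face_cells_cong:
  "(\<And>i. i \<in> S \<Longrightarrow> P i = P' i) \<Longrightarrow> face_cells S P = face_cells S P'"
  unfolding face_cells_def by auto

lemma finite_vec_range:
  assumes "finite U"
  shows "finite {x::'a^'n. \<forall>i. x$i \<in> U}"
proof -
  have "vec_nth ` {x::'a^'n. \<forall>i. x$i \<in> U} \<subseteq> (\<Pi>\<^sub>E i\<in>UNIV. U)" by auto
  then have "finite (vec_nth ` {x::'a^'n. \<forall>i. x$i \<in> U})"
    by (rule finite_subset) (simp add: assms finite_PiE)
  then show ?thesis by (rule finite_imageD) (simp add: inj_on_def vec_eq_iff)
qed

lemma finite_face_cells:
  fixes P :: "'n::finite \<Rightarrow> real set"
  assumes "\<And>i. finite (P i)"
  shows "finite (face_cells S P)"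
proof -
  let ?V = "{x::real^'n. \<forall>i. x$i \<in> insert 0 (\<Union>i. P i)}"
  have "face_cells S P \<subseteq> ?V \<times> ?V"
    by (auto simp: face_cells_def) (metis, metis)
  moreover have "finite ?V" by (rule finite_vec_range) (simp add: assms)
  then have "finite (?V \<times> ?V)" by blast
  ultimately show ?thesis by (rule finite_subset)
qed

text \<open>No division point lies strictly inside a cell, so a cell is determined by either corner.\<close>

lemma face_cells_lower_determines:
  assumes "(c, e) \<in> face_cells S P" "(c, e') \<in> face_cells S P"
  shows "e = e'"
proof -
  have "e$i = e'$i" for i
  proof (cases "i \<in> S")
    case True
    then have "e$i \<in> P i" "e'$i \<in> P i" "c$i < e$i" "c$i < e'$i"
      "P i \<inter> {c$i<..<e$i} = {}" "P i \<inter> {c$i<..<e'$i} = {}"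
      using assms by (auto simp: mem_face_cells)
    then show ?thesis by (metis disjoint_iff greaterThanLessThan_iff linorder_neqE_linordered_idom)
  qed (use assms in \<open>auto simp: mem_face_cells\<close>)
  then show ?thesis by (simp add: vec_eq_iff)
qed

lemma face_cells_upper_determines:
  assumes "(c, e) \<in> face_cells S P" "(c', e) \<in> face_cells S P"
  shows "c = c'"
proof -
  have "c$i = c'$i" for i
  proof (cases "i \<in> S")
    case True
    then have "c$i \<in> P i" "c'$i \<in> P i" "c$i < e$i" "c'$i < e$i"
      "P i \<inter> {c$i<..<e$i} = {}" "P i \<inter> {c'$i<..<e$i} = {}"
      using assms by (auto simp: mem_face_cells)
    then show ?thesis by (metis disjoint_iff greaterThanLessThan_iff linorder_neqE_linordered_idom)
  qed (use assms in \<open>auto simp: mem_face_cells\<close>)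
  then show ?thesis by (simp add: vec_eq_iff)
qed

lemma inj_on_face_cells_upd_upper:
  "inj_on (\<lambda>ce. (fst ce, vec_upd (snd ce) k t)) (face_cells S P)"
proof (rule inj_onI)
  fix x y assume x: "x \<in> face_cells S P" and y: "y \<in> face_cells S P"
    and eq: "(fst x, vec_upd (snd x) k t) = (fst y, vec_upd (snd y) k t)"
  then have "fst x = fst y" by simp
  then have "(fst x, snd x) \<in> face_cells S P" "(fst x, snd y) \<in> face_cells S P"
    using x y by (metis prod.collapse)+
  then have "snd x = snd y" by (rule face_cells_lower_determines)
  with \<open>fst x = fst y\<close> show "x = y" by (simp add: prod_eq_iff)
qed

lemma inj_on_face_cells_upd_lower:
  "inj_on (\<lambda>ce. (vec_upd (fst ce) k t, snd ce)) (face_cells S P)"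
proof (rule inj_onI)
  fix x y assume x: "x \<in> face_cells S P" and y: "y \<in> face_cells S P"
    and eq: "(vec_upd (fst x) k t, snd x) = (vec_upd (fst y) k t, snd y)"
  then have "snd x = snd y" by simp
  then have "(fst x, snd x) \<in> face_cells S P" "(fst y, snd x) \<in> face_cells S P"
    using x y by (metis prod.collapse)+
  then have "fst x = fst y" by (rule face_cells_upper_determines)
  with \<open>snd x = snd y\<close> show "x = y" by (simp add: prod_eq_iff)
qed

lemma face_cell_insert_point:
  assumes "(c, e) \<in> face_cells S P" "\<not> (c$k < t \<and> t < e$k)"
  shows "(c, e) \<in> face_cells S (P(k := insert t (P k)))"
  using assms by (auto simp: mem_face_cells)

lemma face_cell_split_at_point:
  assumes "(c, e) \<in> face_cells S P" "c$k < t" "t < e$k"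
  shows "(c, vec_upd e k t) \<in> face_cells S (P(k := insert t (P k)))"
    and "(vec_upd c k t, e) \<in> face_cells S (P(k := insert t (P k)))"
  using assms by (auto simp: mem_face_cells disjoint_iff) (meson less_trans)+

definition vitali_sum :: "(real^'n \<Rightarrow> real) \<Rightarrow> 'n::finite set \<Rightarrow> ('n \<Rightarrow> real set) \<Rightarrow> real" where
  "vitali_sum h S P = (\<Sum>ce\<in>face_cells S P. \<bar>box_delta h S (fst ce) (snd ce)\<bar>)"

lemma vitali_sum_nonneg: "0 \<le> vitali_sum h S P"
  unfolding vitali_sum_def by (rule sum_nonneg) simp

lemma vitali_sum_add_le:
  "vitali_sum (\<lambda>x. f x + g x) S P \<le> vitali_sum f S P + vitali_sum g S P"
  unfolding vitali_sum_def box_delta_add sum.distrib[symmetric]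
  by (rule sum_mono) (rule abs_triangle_ineq)

text \<open>Inserting a point t in coordinate k leaves the cells not straddling t unchanged and cuts
  each straddling cell in two, across which box_delta is additive.\<close>

lemma vitali_sum_insert_point_le:
  fixes P :: "'n::finite \<Rightarrow> real set"
  assumes fin: "\<And>i. finite (P i)"
  shows "vitali_sum h S P \<le> vitali_sum h S (P(k := insert t (P k)))"
proof (cases "k \<in> S \<and> t \<notin> P k")
  case False
  then have "face_cells S (P(k := insert t (P k))) = face_cells S P"
    by (intro face_cells_cong) (auto simp: insert_absorb)
  then show ?thesis by (simp add: vitali_sum_def)
next
  case True
  then have k: "k \<in> S" and t: "t \<notin> P k" by auto
  define F where "F = face_cells S P"
  define F' where "F' = face_cells S (P(k := insert t (P k)))"
  define \<phi> where "\<phi> ce = \<bar>box_delta h S (fst ce) (snd ce)\<bar>" for ce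
  define A where "A = {ce\<in>F. \<not> (fst ce$k < t \<and> t < snd ce$k)}"
  define B where "B = {ce\<in>F. fst ce$k < t \<and> t < snd ce$k}"
  define lower where "lower = (\<lambda>ce :: (real^'n) \<times> (real^'n). (fst ce, vec_upd (snd ce) k t))"
  define upper where "upper = (\<lambda>ce :: (real^'n) \<times> (real^'n). (vec_upd (fst ce) k t, snd ce))"
  have finF: "finite F" "finite F'" unfolding F_def F'_def by (intro finite_face_cells; simp add: fin)+
  have cell: "(fst x, snd x) \<in> face_cells S P" if "x \<in> B" for x
    using that by (simp add: B_def F_def)
  have sub: "A \<union> lower ` B \<union> upper ` B \<subseteq> F'"
  proof -
    have "x \<in> F'" if "x \<in> A" for x
      using that face_cell_insert_point[of "fst x" "snd x" S P k t] by (simp add: A_def F_def F'_def)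
    moreover have "lower x \<in> F'" "upper x \<in> F'" if "x \<in> B" for x
      using that face_cell_split_at_point[OF cell[OF that]]
      by (simp_all add: B_def F'_def lower_def upper_def)
    ultimately show ?thesis by blast
  qed
  have A_corners: "fst x $ k \<in> P k" "snd x $ k \<in> P k" if "x \<in> A" for x
    using that k by (auto simp: A_def F_def face_cells_def)
  have lower_corners: "fst x $ k \<in> P k" "snd x $ k = t" if "x \<in> lower ` B" for x
    using that k by (auto simp: B_def F_def face_cells_def lower_def)
  have upper_corner: "fst x $ k = t" if "x \<in> upper ` B" for x
    using that by (auto simp: upper_def)
  have disj: "A \<inter> lower ` B = {}" "A \<inter> upper ` B = {}" "lower ` B \<inter> upper ` B = {}"
    using A_corners lower_corners upper_corner t by (metis disjoint_iff)+
  have "B \<subseteq> face_cells S P" by (simp add: B_def F_def)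
  then have inj: "inj_on lower B" "inj_on upper B"
    unfolding lower_def upper_def
    by (auto intro: inj_on_subset inj_on_face_cells_upd_upper inj_on_face_cells_upd_lower)
  have FAB: "F = A \<union> B" "A \<inter> B = {}" by (auto simp: A_def B_def)
  have finAB: "finite A" "finite B" using finF(1) FAB(1) by auto
  have "vitali_sum h S P = sum \<phi> A + sum \<phi> B"
    unfolding vitali_sum_def F_def[symmetric] \<phi>_def[symmetric] FAB(1)
    by (rule sum.union_disjoint[OF finAB FAB(2)])
  also have "sum \<phi> B \<le> (\<Sum>ce\<in>B. \<phi> (lower ce) + \<phi> (upper ce))"
  proof (rule sum_mono)
    fix ce
    show "\<phi> ce \<le> \<phi> (lower ce) + \<phi> (upper ce)"
      using box_delta_cut[OF k, of h "fst ce" "snd ce" t] by (simp add: \<phi>_def lower_def upper_def)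
  qed
  also have "\<dots> = sum \<phi> (lower ` B) + sum \<phi> (upper ` B)"
    by (simp add: sum.distrib sum.reindex[OF inj(1)] sum.reindex[OF inj(2)])
  also have "sum \<phi> A + (sum \<phi> (lower ` B) + sum \<phi> (upper ` B)) = sum \<phi> (A \<union> lower ` B \<union> upper ` B)"
    using finAB disj by (simp add: sum.union_disjoint Int_Un_distrib2 add.assoc)
  also have "\<dots> \<le> sum \<phi> F'"
    by (rule sum_mono2[OF finF(2) sub]) (simp add: \<phi>_def)
  finally show ?thesis by (simp add: vitali_sum_def F'_def \<phi>_def)
qed

lemma vitali_sum_refine_le:
  fixes P P' :: "'n::finite \<Rightarrow> real set"
  assumes "\<And>i. finite (P' i)" "\<And>i. P i \<subseteq> P' i"
  shows "vitali_sum h S P \<le> vitali_sum h S P'"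
  using assms(2)
proof (induction "\<Sum>i\<in>UNIV. card (P' i - P i)" arbitrary: P rule: less_induct)
  case (less P)
  show ?case
  proof (cases "\<forall>i. P i = P' i")
    case True
    then have "P = P'" by blast
    then show ?thesis by simp
  next
    case False
    then obtain k t where t: "t \<in> P' k" "t \<notin> P k" using less.prems by blast
    define P1 where "P1 = P(k := insert t (P k))"
    have "card (P' k - P1 k) < card (P' k - P k)"
      using t assms(1) by (intro psubset_card_mono) (auto simp: P1_def)
    then have "(\<Sum>i\<in>UNIV. card (P' i - P1 i)) < (\<Sum>i\<in>UNIV. card (P' i - P i))"
      using assms(1) by (intro sum_strict_mono_ex1) (auto simp: P1_def intro!: card_mono)
    moreover have "\<And>i. P1 i \<subseteq> P' i" using less.prems t by (auto simp: P1_def)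
    ultimately have "vitali_sum h S P1 \<le> vitali_sum h S P'" by (rule less.hyps)
    moreover have "vitali_sum h S P \<le> vitali_sum h S P1"
      unfolding P1_def using assms(1) less.prems
      by (intro vitali_sum_insert_point_le) (meson finite_subset)
    ultimately show ?thesis by linarith
  qed
qed

lemma grid_partitionsI:
  "(\<And>i. finite (R i)) \<Longrightarrow> (\<And>i. {0, b$i} \<subseteq> R i) \<Longrightarrow> (\<And>i. R i \<subseteq> {0..b$i})
   \<Longrightarrow> R \<in> grid_partitions b"
  by (simp add: grid_partitions_def)

lemma grid_partitionsD:
  assumes "R \<in> grid_partitions b"
  shows "finite (R i)" "0 \<in> R i" "b$i \<in> R i" "R i \<subseteq> {0..b$i}"
  using assms by (auto simp: grid_partitions_def)

lemma endpoints_in_grid_partitions: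
  "\<forall>i. 0 \<le> x$i \<Longrightarrow> (\<lambda>i. {0, x$i}) \<in> grid_partitions x"
  by (auto simp: grid_partitions_def)

lemma grid_partitions_extend:
  assumes "Q \<in> grid_partitions a" "\<forall>i. 0 \<le> a$i" "\<forall>i. a$i \<le> b$i"
  shows "(\<lambda>i. insert (b$i) (Q i)) \<in> grid_partitions b"
proof (rule grid_partitionsI)
  fix i
  have "a$i \<le> b$i" "0 \<le> a$i" using assms(2,3) by auto
  then show "finite (insert (b$i) (Q i))" "{0, b$i} \<subseteq> insert (b$i) (Q i)"
    "insert (b$i) (Q i) \<subseteq> {0..b$i}"
    using grid_partitionsD[OF assms(1), of i] by auto
qed

lemma restrict_grid_partitions:
  assumes "R \<in> grid_partitions b" "\<forall>i. a$i \<in> R i" "\<forall>i. 0 \<le> a$i"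
  shows "(\<lambda>i. R i \<inter> {0..a$i}) \<in> grid_partitions a"
  using assms by (auto simp: grid_partitions_def)

lemma face_cells_restrict_subset:
  "face_cells S (\<lambda>i. R i \<inter> {0..a$i}) \<subseteq> face_cells S R"
proof (clarify)
  fix c e assume ce: "(c, e) \<in> face_cells S (\<lambda>i. R i \<inter> {0..a$i})"
  have "{c$i<..<e$i} \<subseteq> {0..a$i}" if "i \<in> S" for i
    using ce that by (auto simp: mem_face_cells)
  then show "(c, e) \<in> face_cells S R"
    using ce by (auto simp: mem_face_cells)
qed

lemma vitali_sum_restrict:
  assumes "\<And>i. finite (R i)"
  shows "vitali_sum h S R = vitali_sum h S (\<lambda>i. R i \<inter> {0..a$i})
    + (\<Sum>ce\<in>face_cells S R - face_cells S (\<lambda>i. R i \<inter> {0..a$i}). \<bar>box_delta h S (fst ce) (snd ce)\<bar>)"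
  unfolding vitali_sum_def
  by (subst sum.subset_diff[OF face_cells_restrict_subset[of S R a] finite_face_cells[OF assms]])
    (rule add.commute)

lemma vitali_var_face_eq_SUP:
  "vitali_var_face h S x = (SUP P\<in>grid_partitions x. ereal (vitali_sum h S P))"
  by (simp add: vitali_var_face_def vitali_sum_def)

lemma vitali_sum_le_vitali_var_face:
  "P \<in> grid_partitions x \<Longrightarrow> ereal (vitali_sum h S P) \<le> vitali_var_face h S x"
  unfolding vitali_var_face_eq_SUP by (rule SUP_upper)

lemma vitali_var_face_nonneg:
  "\<forall>i. 0 \<le> x$i \<Longrightarrow> 0 \<le> vitali_var_face h S x"
  using vitali_sum_le_vitali_var_face[OF endpoints_in_grid_partitions] vitali_sum_nonneg
  by (meson ereal_less_eq(5) order_trans)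

lemma vitali_var_face_mono:
  assumes a0: "\<forall>i. 0 \<le> a$i" and ab: "\<forall>i. a$i \<le> b$i"
  shows "vitali_var_face h S a \<le> vitali_var_face h S b"
  unfolding vitali_var_face_eq_SUP[where x = a]
proof (rule SUP_least)
  fix Q assume Q: "Q \<in> grid_partitions a"
  define R where "R = (\<lambda>i. insert (b$i) (Q i))"
  have R: "R \<in> grid_partitions b" unfolding R_def by (rule grid_partitions_extend[OF Q a0 ab])
  have "vitali_sum h S Q \<le> vitali_sum h S (\<lambda>i. R i \<inter> {0..a$i})"
    using grid_partitionsD[OF Q] grid_partitionsD(1)[OF R]
    by (intro vitali_sum_refine_le) (auto simp: R_def)
  also have "\<dots> \<le> vitali_sum h S R"
    unfolding vitali_sum_restrict[OF grid_partitionsD(1)[OF R], where a = a] by (simp add: sum_nonneg)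
  finally show "ereal (vitali_sum h S Q) \<le> vitali_var_face h S b"
    using vitali_sum_le_vitali_var_face[OF R, of h S] by (meson ereal_less_eq(3) order_trans)
qed

lemma vitali_var_face_add_le:
  "vitali_var_face (\<lambda>y. f y + g y) S x \<le> vitali_var_face f S x + vitali_var_face g S x"
  unfolding vitali_var_face_eq_SUP[where h = "\<lambda>y. f y + g y"]
proof (rule SUP_least)
  fix P assume P: "P \<in> grid_partitions x"
  have "ereal (vitali_sum (\<lambda>y. f y + g y) S P) \<le> ereal (vitali_sum f S P) + ereal (vitali_sum g S P)"
    using vitali_sum_add_le[of f g S P] by simp
  also have "\<dots> \<le> vitali_var_face f S x + vitali_var_face g S x"
    by (intro add_mono vitali_sum_le_vitali_var_face P)
  finally show "ereal (vitali_sum (\<lambda>y. f y + g y) S P) \<le> vitali_var_face f S x + vitali_var_face g S x" .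
qed

lemma vitali_sum_exchange_le:
  assumes a0: "\<forall>i. 0 \<le> a$i" and ab: "\<forall>i. a$i \<le> b$i"
    and P: "P \<in> grid_partitions b" and Q: "Q \<in> grid_partitions a" and Q': "Q' \<in> grid_partitions a"
  shows "ereal (vitali_sum (\<lambda>x. f x + g x) S P) + ereal (vitali_sum f S Q) + ereal (vitali_sum g S Q')
    \<le> vitali_var_face (\<lambda>x. f x + g x) S a + vitali_var_face f S b + vitali_var_face g S b"
proof -
  define R where "R = (\<lambda>i. insert (a$i) (P i \<union> Q i \<union> Q' i))"
  define Ra where "Ra = (\<lambda>i. R i \<inter> {0..a$i})"
  define outer where "outer h = (\<Sum>ce\<in>face_cells S R - face_cells S Ra. \<bar>box_delta h S (fst ce) (snd ce)\<bar>)"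
    for h
  have R: "R \<in> grid_partitions b"
  proof (rule grid_partitionsI)
    fix i
    have "a$i \<le> b$i" "0 \<le> a$i" using a0 ab by auto
    then show "finite (R i)" "{0, b$i} \<subseteq> R i" "R i \<subseteq> {0..b$i}"
      using grid_partitionsD[OF P, of i] grid_partitionsD[OF Q, of i] grid_partitionsD[OF Q', of i]
      by (auto simp: R_def)
  qed
  have finR: "\<And>i. finite (R i)" using grid_partitionsD(1)[OF R] .
  have Ra: "Ra \<in> grid_partitions a"
    unfolding Ra_def by (rule restrict_grid_partitions[OF R _ a0]) (simp add: R_def)
  have split: "vitali_sum h S R = vitali_sum h S Ra + outer h" for h
    unfolding Ra_def outer_def by (rule vitali_sum_restrict[OF finR])
  have "vitali_sum (\<lambda>x. f x + g x) S P \<le> vitali_sum (\<lambda>x. f x + g x) S R"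
    using finR by (rule vitali_sum_refine_le) (auto simp: R_def)
  moreover have "outer (\<lambda>x. f x + g x) \<le> outer f + outer g"
    unfolding outer_def box_delta_add sum.distrib[symmetric] by (rule sum_mono) (rule abs_triangle_ineq)
  moreover have "Q i \<subseteq> Ra i" "Q' i \<subseteq> Ra i" for i
    using grid_partitionsD(4)[OF Q, of i] grid_partitionsD(4)[OF Q', of i] by (auto simp: Ra_def R_def)
  then have "vitali_sum f S Q \<le> vitali_sum f S Ra" "vitali_sum g S Q' \<le> vitali_sum g S Ra"
    using grid_partitionsD(1)[OF Ra] by (simp_all add: vitali_sum_refine_le)
  ultimately have "vitali_sum (\<lambda>x. f x + g x) S P + vitali_sum f S Q + vitali_sum g S Q'
      \<le> vitali_sum (\<lambda>x. f x + g x) S Ra + vitali_sum f S R + vitali_sum g S R"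
    using split[of f] split[of g] split[of "\<lambda>x. f x + g x"] by linarith
  then have "ereal (vitali_sum (\<lambda>x. f x + g x) S P) + ereal (vitali_sum f S Q) + ereal (vitali_sum g S Q')
      \<le> ereal (vitali_sum (\<lambda>x. f x + g x) S Ra) + ereal (vitali_sum f S R) + ereal (vitali_sum g S R)"
    by simp
  also have "\<dots> \<le> vitali_var_face (\<lambda>x. f x + g x) S a + vitali_var_face f S b + vitali_var_face g S b"
    by (intro add_mono vitali_sum_le_vitali_var_face R Ra)
  finally show ?thesis .
qed

lemma vitali_var_face_exchange:
  assumes a0: "\<forall>i. 0 \<le> a$i" and ab: "\<forall>i. a$i \<le> b$i"
  shows "vitali_var_face (\<lambda>x. f x + g x) S b + vitali_var_face f S a + vitali_var_face g S a
    \<le> vitali_var_face (\<lambda>x. f x + g x) S a + vitali_var_face f S b + vitali_var_face g S b"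
    (is "?Vh b + ?Vf a + ?Vg a \<le> ?C")
proof -
  have b0: "\<forall>i. 0 \<le> b$i" using a0 ab by (meson order_trans)
  have ne: "grid_partitions a \<noteq> {}" "grid_partitions b \<noteq> {}"
    using endpoints_in_grid_partitions a0 b0 by blast+
  let ?G = "grid_partitions a \<times> grid_partitions a"
  let ?pair = "\<lambda>q. ereal (vitali_sum f S (fst q)) + ereal (vitali_sum g S (snd q))"
  have "?Vf a + ?Vg a \<le> (SUP q\<in>?G. ?pair q)"
    unfolding vitali_var_face_eq_SUP
  proof (rule ereal_SUP_add_SUP_le[OF ne(1) ne(1)])
    fix Q Q' assume "Q \<in> grid_partitions a" "Q' \<in> grid_partitions a"
    then have "(Q, Q') \<in> ?G" by simp
    then show "ereal (vitali_sum f S Q) + ereal (vitali_sum g S Q') \<le> (SUP q\<in>?G. ?pair q)"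
      by (rule SUP_upper2) simp
  qed (simp_all add: vitali_sum_nonneg)
  then have "?Vh b + ?Vf a + ?Vg a \<le> ?Vh b + (SUP q\<in>?G. ?pair q)"
    by (simp add: add.assoc add_left_mono)
  also have "\<dots> \<le> ?C"
    unfolding vitali_var_face_eq_SUP[where h = "\<lambda>x. f x + g x" and x = b]
  proof (rule ereal_SUP_add_SUP_le[OF ne(2)])
    fix P q assume "P \<in> grid_partitions b" "q \<in> ?G"
    then show "ereal (vitali_sum (\<lambda>x. f x + g x) S P) + ?pair q \<le> ?C"
      using vitali_sum_exchange_le[OF a0 ab, of P "fst q" "snd q"] by (simp add: mem_Times_iff add.assoc)
  qed (use ne(1) in \<open>simp_all add: vitali_sum_nonneg\<close>)
  finally show ?thesis .
qed

lemma vitali_var_face_zero: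
  assumes "S \<noteq> {}"
  shows "vitali_var_face h S (0::real^'n::finite) = 0"
proof -
  obtain k where k: "k \<in> S" using assms by auto
  have "face_cells S P = {}" if "P \<in> grid_partitions (0::real^'n)" for P
  proof -
    have "P k \<subseteq> {0}" using grid_partitionsD(4)[OF that, of k] by simp
    then have "\<not> (c$k \<in> P k \<and> e$k \<in> P k \<and> c$k < e$k)" for c e :: "real^'n"
      by (metis less_irrefl singletonD subsetD)
    then have "(c, e) \<notin> face_cells S P" for c e unfolding mem_face_cells using k by blast
    then show ?thesis by auto
  qed
  then have "vitali_var_face h S 0 = (SUP P\<in>grid_partitions (0::real^'n). 0)"
    unfolding vitali_var_face_eq_SUP by (intro SUP_cong) (simp_all add: vitali_sum_def)
  also have "\<dots> = 0"
    by (rule SUP_const) (use endpoints_in_grid_partitions[of "0::real^'n"] in auto)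
  finally show ?thesis .
qed

lemma var_HK0_eq_sum:
  "var_HK0 h (x::real^'n::finite) = (\<Sum>S\<in>{S. S \<noteq> {}}. vitali_var_face h S x)"
  by (simp add: var_HK0_def vitali_var_face_zero)

lemma var_HK0_nonneg:
  "\<forall>i. 0 \<le> x$i \<Longrightarrow> 0 \<le> var_HK0 h x"
  unfolding var_HK0_eq_sum by (intro sum_nonneg vitali_var_face_nonneg)

lemma var_HK0_mono:
  "\<forall>i. 0 \<le> a$i \<Longrightarrow> \<forall>i. a$i \<le> b$i \<Longrightarrow> var_HK0 h a \<le> var_HK0 h b"
  unfolding var_HK0_eq_sum by (intro sum_mono vitali_var_face_mono)

lemma var_HK0_add_le:
  "var_HK0 (\<lambda>y. f y + g y) x \<le> var_HK0 f x + var_HK0 g x"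
  unfolding var_HK0_eq_sum sum.distrib[symmetric] by (intro sum_mono vitali_var_face_add_le)

lemma var_HK0_exchange:
  "\<forall>i. 0 \<le> a$i \<Longrightarrow> \<forall>i. a$i \<le> b$i \<Longrightarrow>
    var_HK0 (\<lambda>x. f x + g x) b + var_HK0 f a + var_HK0 g a
    \<le> var_HK0 (\<lambda>x. f x + g x) a + var_HK0 f b + var_HK0 g b"
  unfolding var_HK0_eq_sum sum.distrib[symmetric] by (intro sum_mono vitali_var_face_exchange)

lemma bounded_HK0_add:
  assumes "bounded_HK0 f" "bounded_HK0 g"
  shows "bounded_HK0 (\<lambda>x. f x + g x)"
proof -
  have "var_HK0 f (\<chi> i. 1) + var_HK0 g (\<chi> i. 1) < \<infinity>"
    using assms by (simp add: bounded_HK0_def)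
  with var_HK0_add_le show ?thesis
    unfolding bounded_HK0_def by (rule order.strict_trans1)
qed

lemma var_HK0_finite:
  assumes "bounded_HK0 h" "\<forall>i. 0 \<le> x$i \<and> x$i \<le> 1"
  shows "\<bar>var_HK0 h x\<bar> \<noteq> \<infinity>"
proof -
  have "var_HK0 h x \<le> var_HK0 h (\<chi> i. 1)"
    using assms(2) by (intro var_HK0_mono) auto
  then have "var_HK0 h x < \<infinity>"
    using assms(1) unfolding bounded_HK0_def by (rule order.strict_trans1)
  moreover have "0 \<le> var_HK0 h x" using assms(2) by (simp add: var_HK0_nonneg)
  ultimately show ?thesis by auto
qed

theorem lemma1:
  fixes f g :: "real^'n \<Rightarrow> real" and a b :: "real^'n"
  assumes "bounded_HK0 f" and "bounded_HK0 g"
    and "\<forall>i. 0 \<le> a$i \<and> a$i \<le> 1" and "\<forall>i. 0 \<le> b$i \<and> b$i \<le> 1"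
    and "\<forall>i. a$i \<le> b$i"
  shows "var_HK0 (\<lambda>x. f x + g x) b - var_HK0 (\<lambda>x. f x + g x) a
         \<le> var_HK0 f b + var_HK0 g b - var_HK0 f a - var_HK0 g a"
proof (rule ereal_diff_le_of_add_le)
  have sum_bounded: "bounded_HK0 (\<lambda>x. f x + g x)" using assms(1,2) by (rule bounded_HK0_add)
  from sum_bounded assms(4) show "\<bar>var_HK0 (\<lambda>x. f x + g x) b\<bar> \<noteq> \<infinity>" by (rule var_HK0_finite)
  from sum_bounded assms(3) show "\<bar>var_HK0 (\<lambda>x. f x + g x) a\<bar> \<noteq> \<infinity>"
    by (rule var_HK0_finite)
  from assms(1,3) show "\<bar>var_HK0 f a\<bar> \<noteq> \<infinity>" by (rule var_HK0_finite)
  from assms(2,3) show "\<bar>var_HK0 g a\<bar> \<noteq> \<infinity>" by (rule var_HK0_finite)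
  from assms(1,4) show "\<bar>var_HK0 f b\<bar> \<noteq> \<infinity>" by (rule var_HK0_finite)
  from assms(2,4) show "\<bar>var_HK0 g b\<bar> \<noteq> \<infinity>" by (rule var_HK0_finite)
  have "\<forall>i. 0 \<le> a$i" using assms(3) by blast
  with assms(5) show "var_HK0 (\<lambda>x. f x + g x) b + var_HK0 f a + var_HK0 g a
      \<le> var_HK0 (\<lambda>x. f x + g x) a + var_HK0 f b + var_HK0 g b"
    by (intro var_HK0_exchange)
qed

end
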